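(* Let $\mathfrak g$ be a real Lie algebra of dimension $4$ endowed with a generalized complex structure $(J,R,\sigma)$ of type $1$. Put $\mathfrak h=\operatorname{Im}R$ and $\mathfrak p=\ker\sigma$. Then $\mathfrak g=\mathfrak h\oplus\mathfrak p$. Moreover, for any basis $(e_1,e_2)$ of $\mathfrak h$ and any nonzero $e_3\in\mathfrak p$, setting $e_4=Je_3$, $(e_1,e_2,e_3,e_4)$ is a basis of $\mathfrak g$ and: 1. $J=\lambda(E_{11}+E_{22})+E_{34}-E_{43}$, $R=a\,e_{12}^{\#}$ and $\sigma=a^{-1}(1+\lambda^2)e^{12}_{\#}$ for some $\lambda\in\mathbb R$ and $a\neq0$. 2. There are real numbers $a_1,a_2,b_1,\dots,b_4,x_1,x_2,y_1,y_2,p_1,p_2,q_1,q_2,r_1,r_2$ such that the Lie brackets are $[e_1,e_2]=a_1e_1+a_2e_2$, $[e_3,e_4]=b_1e_1+b_2e_2+b_3e_3+b_4e_4$, $[e_1,e_3]=x_1e_3-y_1e_4-p_1e_1-r_1e_2$, $[e_1,e_4]=y_1e_3+x_1e_4-p_2e_1-r_2e_2$, $[e_2,e_3]=x_2e_3-y_2e_4-q_1e_1+p_1e_2$, $[e_2,e_4]=y_2e_3+x_2e_4-q_2e_1+p_2e_2$. 3. For brackets of the form in item 2, the Jacobi identity is equivalent to the system $a_1x_1+a_2x_2=0$, $a_1y_1+a_2y_2=0$, $a_1p_1+a_2q_1-p_1x_2+p_2y_2+q_1x_1-q_2y_1=0$, $a_1r_1-a_2p_1-p_1x_1+p_2y_1-r_1x_2+r_2y_2=0$,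 $a_1p_2+a_2q_2-p_1y_2-p_2x_2+q_1y_1+q_2x_1=0$, $a_1r_2-a_2p_2-p_1y_1-p_2x_1-r_1y_2-r_2x_2=0$, $a_1b_2-2b_1x_1-b_3p_1-b_4p_2+q_1r_2-q_2r_1=0$, $a_2b_2-2b_2x_1-b_3r_1-b_4r_2-2p_1r_2+2p_2r_1=0$, $-b_3x_1+b_4y_1+p_1y_1-p_2x_1+r_1y_2-r_2x_2=0$, $-b_3y_1-b_4x_1+p_1x_1+p_2y_1+r_1x_2+r_2y_2=0$, $-a_1b_1-2b_1x_2-b_3q_1-b_4q_2+2p_1q_2-2p_2q_1=0$, $-a_2b_1-2b_2x_2+b_3p_1+b_4p_2-q_1r_2+q_2r_1=0$, $-b_3x_2+b_4y_2-p_1y_2+p_2x_2+q_1y_1-q_2x_1=0$, $-b_3y_2-b_4x_2-p_1x_2-p_2y_2+q_1x_1+q_2y_1=0$.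
   Context: Let $\mathfrak g$ be a real finite-dimensional Lie algebra, $\Phi(\mathfrak g)=\mathfrak g\oplus\mathfrak g^*$ with the neutral pairing $\langle u+\alpha,v+\beta\rangle=\tfrac12(\alpha(v)+\beta(u))$ and the bracket $[u+\alpha,v+\beta]=[u,v]+\mathrm{ad}_u^t\beta-\mathrm{ad}_v^t\alpha$, where $(\mathrm{ad}_u^t\alpha)(v)=-\alpha([u,v])$. A generalized complex structure on $\mathfrak g$ is an endomorphism $K$ of $\Phi(\mathfrak g)$ with $K^2=-\mathrm{Id}$, $\langle Ka,b\rangle+\langle a,Kb\rangle=0$ for all $a,b$, and vanishing Nijenhuis torsion $N_K(a,b)=[Ka,Kb]-K[Ka,b]-K[a,Kb]+K^2[a,b]$. Writing $K=\begin{pmatrix}J&R\\ \sigma&-J^*\end{pmatrix}$ with $J\in\mathrm{End}(\mathfrak g)$ and skew-symmetric $R:\mathfrak g^*\to\mathfrak g$, $\sigma:\mathfrak g\to\mathfrak g^*$, the triple $(J,R,\sigma)$ is also called a generalized complex structure on $\mathfrak g$. Its type is $\tfrac12\dim(\operatorname{Im}R)^0$ (annihilator); for $\dim\mathfrak g=4$, type $0$ means $R$ invertible, type $1$ means $\operatorname{rank}R=2$, type $2$ means $R=0$. Notation: for a basis $(e_i)$ with dual basis $(e^i)$, $E_{ij}$ is the endomorphism sending $e_j$ to $e_i$ and vanishing on $e_k$, $k\ne j$; $e_{ij}=e_i\wedge e_j$, $e^{ij}=e^i\wedge e^j$; for $\pi\in\wedge^2\mathfrak g$, $\pi^\#:\mathfrak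 g^*\to\mathfrak g$ is defined by $\beta(\pi^\#(\alpha))=\pi(\alpha,\beta)$; for $\omega\in\wedge^2\mathfrak g^*$, $\omega_\#:\mathfrak g\to\mathfrak g^*$ is $u\mapsto i_u\omega$. Thus $e_{12}^\#=(e_1\wedge e_2)^\#$ and $e^{12}_\#=(e^1\wedge e^2)_\#$. *)

theory Defs
  imports "HOL-Analysis.Analysis"
begin

definition lie_algebra :: "('a::real_vector \<Rightarrow> 'a \<Rightarrow> 'a) \<Rightarrow> bool" where
  "lie_algebra br \<longleftrightarrow> bilinear br \<and> (\<forall>u. br u u = 0) \<and>
     (\<forall>u v w. br u (br v w) + br v (br w u) + br w (br u v) = 0)"

type_synonym 'a phi = "'a \<times> ('a \<Rightarrow> real)"

definition in_Phi :: "'a::real_vector phi \<Rightarrow> bool" where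
  "in_Phi p \<longleftrightarrow> linear (snd p)"

definition phi_add :: "'a::real_vector phi \<Rightarrow> 'a phi \<Rightarrow> 'a phi" where
  "phi_add p q = (fst p + fst q, \<lambda>w. snd p w + snd q w)"

definition phi_scale :: "real \<Rightarrow> 'a::real_vector phi \<Rightarrow> 'a phi" where
  "phi_scale c p = (c *\<^sub>R fst p, \<lambda>w. c * snd p w)"

definition phi_neg :: "'a::real_vector phi \<Rightarrow> 'a phi" where
  "phi_neg p = phi_scale (-1) p"

definition phi_zero :: "'a::real_vector phi" where
  "phi_zero = (0, \<lambda>w. 0)"

definition phi_pair :: "'a::real_vector phi \<Rightarrow> 'a phi \<Rightarrow> real" where
  "phi_pair p q = (snd p (fst q) + snd q (fst p)) / 2"

definition ad_t :: "('a::real_vector \<Rightarrow> 'a \<Rightarrow> 'a) \<Rightarrow> 'a \<Rightarrow> ('a \<Rightarrow> real) \<Rightarrow> ('a \<Rightarrow> real)" where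
  "ad_t br u \<beta> = (\<lambda>v. - \<beta> (br u v))"

definition phi_br :: "('a::real_vector \<Rightarrow> 'a \<Rightarrow> 'a) \<Rightarrow> 'a phi \<Rightarrow> 'a phi \<Rightarrow> 'a phi" where
  "phi_br br p q = (br (fst p) (fst q), \<lambda>w. ad_t br (fst p) (snd q) w - ad_t br (fst q) (snd p) w)"

definition nijenhuis ::
  "('a::real_vector \<Rightarrow> 'a \<Rightarrow> 'a) \<Rightarrow> ('a phi \<Rightarrow> 'a phi) \<Rightarrow> 'a phi \<Rightarrow> 'a phi \<Rightarrow> 'a phi" where
  "nijenhuis br K a b =
     phi_add (phi_add (phi_br br (K a) (K b)) (phi_neg (K (phi_br br (K a) b))))
             (phi_add (phi_neg (K (phi_br br a (K b)))) (K (K (phi_br br a b))))"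

definition gen_complex_structure ::
  "('a::real_vector \<Rightarrow> 'a \<Rightarrow> 'a) \<Rightarrow> ('a phi \<Rightarrow> 'a phi) \<Rightarrow> bool" where
  "gen_complex_structure br K \<longleftrightarrow>
     (\<forall>a. in_Phi a \<longrightarrow> in_Phi (K a)) \<and>
     (\<forall>a b. in_Phi a \<longrightarrow> in_Phi b \<longrightarrow> K (phi_add a b) = phi_add (K a) (K b)) \<and>
     (\<forall>c a. in_Phi a \<longrightarrow> K (phi_scale c a) = phi_scale c (K a)) \<and>
     (\<forall>a. in_Phi a \<longrightarrow> K (K a) = phi_neg a) \<and>
     (\<forall>a b. in_Phi a \<longrightarrow> in_Phi b \<longrightarrow> phi_pair (K a) b + phi_pair a (K b) = 0) \<and>
     (\<forall>a b. in_Phi a \<longrightarrow> in_Phi b \<longrightarrow> nijenhuis br K a b = phi_zero)"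

text \<open>K = [[J, R], [sigma, -J^*]], where (J^* alpha)(v) = alpha(J v).\<close>
definition gc_K ::
  "('a::real_vector \<Rightarrow> 'a) \<Rightarrow> (('a \<Rightarrow> real) \<Rightarrow> 'a) \<Rightarrow> ('a \<Rightarrow> ('a \<Rightarrow> real)) \<Rightarrow> 'a phi \<Rightarrow> 'a phi" where
  "gc_K J R \<sigma> p = (J (fst p) + R (snd p), \<lambda>w. \<sigma> (fst p) w - snd p (J w))"

definition gen_complex_triple ::
  "('a::real_vector \<Rightarrow> 'a \<Rightarrow> 'a) \<Rightarrow> ('a \<Rightarrow> 'a) \<Rightarrow> (('a \<Rightarrow> real) \<Rightarrow> 'a) \<Rightarrow> ('a \<Rightarrow> ('a \<Rightarrow> real)) \<Rightarrow> bool" where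
  "gen_complex_triple br J R \<sigma> \<longleftrightarrow> gen_complex_structure br (gc_K J R \<sigma>)"

text \<open>Im R (R restricted to g^*, the linear functionals) and ker sigma.\<close>
definition imR :: "(('a::real_vector \<Rightarrow> real) \<Rightarrow> 'a) \<Rightarrow> 'a set" where
  "imR R = R ` {\<alpha>. linear \<alpha>}"

definition ker_sigma :: "('a::real_vector \<Rightarrow> ('a \<Rightarrow> real)) \<Rightarrow> 'a set" where
  "ker_sigma \<sigma> = {u. \<sigma> u = (\<lambda>w. 0)}"

text \<open>Type of a generalized complex structure on a 4-dimensional Lie algebra:
  type 1 means rank R = 2 (equivalently (1/2) dim (Im R)^0 = 1).\<close>
definition gc_type1 :: "(('a::euclidean_space \<Rightarrow> real) \<Rightarrow> 'a) \<Rightarrow> bool" where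
  "gc_type1 R \<longleftrightarrow> dim (imR R) = 2"

text \<open>(u \<and> v)^#: g^* \<rightarrow> g, with beta((u\<and>v)^#(alpha)) = (u\<and>v)(alpha,beta)
  = alpha(u) beta(v) - alpha(v) beta(u); hence (u\<and>v)^#(alpha) = alpha(u) v - alpha(v) u.\<close>
definition wedge_sharp :: "'a::real_vector \<Rightarrow> 'a \<Rightarrow> ('a \<Rightarrow> real) \<Rightarrow> 'a" where
  "wedge_sharp u v \<alpha> = \<alpha> u *\<^sub>R v - \<alpha> v *\<^sub>R u"

text \<open>(f \<and> g)_#: g \<rightarrow> g^*, u \<mapsto> i_u (f\<and>g) = (w \<mapsto> f(u) g(w) - f(w) g(u)).\<close>
definition wedge_flat :: "('a \<Rightarrow> real) \<Rightarrow> ('a \<Rightarrow> real) \<Rightarrow> 'a \<Rightarrow> ('a \<Rightarrow> real)" where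
  "wedge_flat f g u = (\<lambda>w. f u * g w - f w * g u)"

text \<open>Dual basis: dual_basis es i is the i-th dual covector (0-based) of the basis list es.\<close>
definition dual_basis :: "'a::real_vector list \<Rightarrow> nat \<Rightarrow> ('a \<Rightarrow> real)" where
  "dual_basis es i = (THE f. linear f \<and> (\<forall>j<length es. f (es ! j) = (if j = i then 1 else 0)))"

definition is_basis_of :: "'a::real_vector list \<Rightarrow> 'a set \<Rightarrow> bool" where
  "is_basis_of es S \<longleftrightarrow> set es \<subseteq> S \<and> span (set es) = S \<and>
     (\<forall>c. (\<Sum>i<length es. c i *\<^sub>R es ! i) = 0 \<longrightarrow> (\<forall>i<length es. c i = 0))"

definition bracket_form ::
  "('a::real_vector \<Rightarrow> 'a \<Rightarrow> 'a) \<Rightarrow> 'a \<Rightarrow> 'a \<Rightarrow> 'a \<Rightarrow> 'a \<Rightarrow>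
   real \<Rightarrow> real \<Rightarrow> real \<Rightarrow> real \<Rightarrow> real \<Rightarrow> real \<Rightarrow> real \<Rightarrow> real \<Rightarrow> real \<Rightarrow> real \<Rightarrow>
   real \<Rightarrow> real \<Rightarrow> real \<Rightarrow> real \<Rightarrow> real \<Rightarrow> real \<Rightarrow> bool" where
  "bracket_form br e1 e2 e3 e4 a1 a2 b1 b2 b3 b4 x1 x2 y1 y2 p1 p2 q1 q2 r1 r2 \<longleftrightarrow>
     br e1 e2 = a1 *\<^sub>R e1 + a2 *\<^sub>R e2 \<and>
     br e3 e4 = b1 *\<^sub>R e1 + b2 *\<^sub>R e2 + b3 *\<^sub>R e3 + b4 *\<^sub>R e4 \<and>
     br e1 e3 = x1 *\<^sub>R e3 - y1 *\<^sub>R e4 - p1 *\<^sub>R e1 - r1 *\<^sub>R e2 \<and>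
     br e1 e4 = y1 *\<^sub>R e3 + x1 *\<^sub>R e4 - p2 *\<^sub>R e1 - r2 *\<^sub>R e2 \<and>
     br e2 e3 = x2 *\<^sub>R e3 - y2 *\<^sub>R e4 - q1 *\<^sub>R e1 + p1 *\<^sub>R e2 \<and>
     br e2 e4 = y2 *\<^sub>R e3 + x2 *\<^sub>R e4 - q2 *\<^sub>R e1 + p2 *\<^sub>R e2"

definition jacobi_system ::
  "real \<Rightarrow> real \<Rightarrow> real \<Rightarrow> real \<Rightarrow> real \<Rightarrow> real \<Rightarrow> real \<Rightarrow> real \<Rightarrow> real \<Rightarrow> real \<Rightarrow>
   real \<Rightarrow> real \<Rightarrow> real \<Rightarrow> real \<Rightarrow> real \<Rightarrow> real \<Rightarrow> bool" where
  "jacobi_system a1 a2 b1 b2 b3 b4 x1 x2 y1 y2 p1 p2 q1 q2 r1 r2 \<longleftrightarrow>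
     a1*x1 + a2*x2 = 0 \<and>
     a1*y1 + a2*y2 = 0 \<and>
     a1*p1 + a2*q1 - p1*x2 + p2*y2 + q1*x1 - q2*y1 = 0 \<and>
     a1*r1 - a2*p1 - p1*x1 + p2*y1 - r1*x2 + r2*y2 = 0 \<and>
     a1*p2 + a2*q2 - p1*y2 - p2*x2 + q1*y1 + q2*x1 = 0 \<and>
     a1*r2 - a2*p2 - p1*y1 - p2*x1 - r1*y2 - r2*x2 = 0 \<and>
     a1*b2 - 2*b1*x1 - b3*p1 - b4*p2 + q1*r2 - q2*r1 = 0 \<and>
     a2*b2 - 2*b2*x1 - b3*r1 - b4*r2 - 2*p1*r2 + 2*p2*r1 = 0 \<and>
     - b3*x1 + b4*y1 + p1*y1 - p2*x1 + r1*y2 - r2*x2 = 0 \<and>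
     - b3*y1 - b4*x1 + p1*x1 + p2*y1 + r1*x2 + r2*y2 = 0 \<and>
     - a1*b1 - 2*b1*x2 - b3*q1 - b4*q2 + 2*p1*q2 - 2*p2*q1 = 0 \<and>
     - a2*b1 - 2*b2*x2 + b3*p1 + b4*p2 - q1*r2 + q2*r1 = 0 \<and>
     - b3*x2 + b4*y2 - p1*y2 + p2*x2 + q1*y1 - q2*x1 = 0 \<and>
     - b3*y2 - b4*x2 - p1*x2 - p2*y2 + q1*x1 + q2*y1 = 0"

definition jacobi_identity :: "('a::real_vector \<Rightarrow> 'a \<Rightarrow> 'a) \<Rightarrow> bool" where
  "jacobi_identity br \<longleftrightarrow> (\<forall>u v w. br u (br v w) + br v (br w u) + br w (br u v) = 0)"

end

theory Submission
  imports Defs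
begin

text \<open>
  Skew-symmetry of K makes R and \<sigma> skew, and K^2 = -1 gives J R = R J^* and J^2 + R \<sigma> = -1.
  Hence, for a basis e1, e2 of h = Im R, the map R is a multiple a (e1 \<and> e2)^# of the bivector,
  J preserves h and acts on it as a scalar \<lambda>, and a \<sigma>(e1, e2) = 1 + \<lambda>^2, so \<sigma> is
  nondegenerate on h. The \<sigma>-orthogonal of h is a complement of h on which J^2 = -1; in dimension 4
  it is spanned by any of its nonzero vectors e3 together with J e3, and \<sigma> vanishes on it because
  \<sigma>(v, J v) = 0, so it is ker \<sigma>. In the frame (e1, e2, e3, J e3) the vanishing of the Nijenhuis
  torsion on a few pairs yields the relations between the structure constants in item 2, and item 3
  is a coordinate computation: by trilinearity and alternation, the Jacobi identity only has to be
  checked on the four triples of distinct basis vectors.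
\<close>

section \<open>Jacobiators\<close>

lemma alternating_skew:
  assumes "bilinear f" and "\<And>u. f u u = 0"
  shows "f v u = - f u v"
proof -
  have "f u u + f v u + (f u v + f v v) = 0"
    using assms(2)[of "u + v"] by (simp add: bilinear_ladd[OF assms(1)] bilinear_radd[OF assms(1)])
  then have "f v u + f u v = 0"
    using assms(2) by simp
  then show ?thesis
    by (simp add: eq_neg_iff_add_eq_0)
qed

definition jacobiator :: "('a::real_vector \<Rightarrow> 'a \<Rightarrow> 'a) \<Rightarrow> 'a \<Rightarrow> 'a \<Rightarrow> 'a \<Rightarrow> 'a" where
  "jacobiator f u v w = f u (f v w) + f v (f w u) + f w (f u v)"

lemma jacobi_identity_iff_jacobiator: "jacobi_identity f \<longleftrightarrow> (\<forall>u v w. jacobiator f u v w = 0)"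
  unfolding jacobi_identity_def jacobiator_def ..

lemma jacobiator_cycle: "jacobiator f u v w = jacobiator f v w u"
  unfolding jacobiator_def by (simp add: algebra_simps)

lemma jacobiator_swap:
  assumes bil: "bilinear f" and alt: "\<And>u. f u u = 0"
  shows "jacobiator f v u w = - jacobiator f u v w"
proof -
  have "f v (f u w) = - f v (f w u)" "f u (f w v) = - f u (f v w)" "f w (f v u) = - f w (f u v)"
    by (simp_all add: alternating_skew[OF bil alt, of u w] alternating_skew[OF bil alt, of w v]
        alternating_skew[OF bil alt, of v u] bilinear_rneg[OF bil])
  then show ?thesis
    unfolding jacobiator_def by (simp add: algebra_simps)
qed

lemma jacobiator_repeat:
  assumes bil: "bilinear f" and alt: "\<And>u. f u u = 0"
  shows "jacobiator f u u w = 0"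
proof -
  have "f u (f w u) = - f u (f u w)"
    by (simp add: alternating_skew[OF bil alt, of w u] bilinear_rneg[OF bil])
  then show ?thesis
    unfolding jacobiator_def by (simp add: alt bilinear_rzero[OF bil])
qed

lemma linear_jacobiator:
  assumes "bilinear f"
  shows "linear (\<lambda>u. jacobiator f u v w)"
proof -
  have lin: "linear (\<lambda>x. f x y)" "linear (f y)" for y
    using assms unfolding bilinear_def by blast+
  show ?thesis
    unfolding jacobiator_def
    by (intro linear_compose_add lin linear_compose[OF lin(1) lin(2), unfolded o_def]
        linear_compose[OF lin(2) lin(2), unfolded o_def])
qed

lemma jacobiator_eq_0_on_span:
  assumes bil: "bilinear f" and alt: "\<And>u. f u u = 0" and B: "span B = UNIV"
    and zero: "\<And>x y z. x \<in> B \<Longrightarrow> y \<in> B \<Longrightarrow> z \<in> B \<Longrightarrow> jacobiator f x y z = 0"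
  shows "jacobiator f u v w = 0"
proof -
  have vanish: "jacobiator f a b c = 0" if "\<And>x. x \<in> B \<Longrightarrow> jacobiator f x b c = 0" for a b c
    using linear_eq_on[OF linear_jacobiator[OF bil] linear_zero, of a B] that B by auto
  have two: "jacobiator f x y c = 0" if "x \<in> B" "y \<in> B" for x y c
    using vanish[where a = c and b = x and c = y] zero that
      jacobiator_cycle[of f x y c] jacobiator_cycle[of f y c x]
    by auto
  have one: "jacobiator f x b c = 0" if x: "x \<in> B" for x b c
  proof -
    have "jacobiator f z c x = 0" if "z \<in> B" for z
      using two[OF x that, of c] jacobiator_cycle[of f x z c] by simp
    then show ?thesis
      using vanish[where a = b and b = c and c = x] jacobiator_cycle[of f x b c] by simp
  qed
  show ?thesis
    using vanish one by blast
qed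

lemma jacobi_identity_iff_basis4:
  assumes bil: "bilinear f" and alt: "\<And>u. f u u = 0" and span: "span {e1, e2, e3, e4} = UNIV"
  shows "jacobi_identity f \<longleftrightarrow>
    jacobiator f e1 e2 e3 = 0 \<and> jacobiator f e1 e2 e4 = 0 \<and>
    jacobiator f e1 e3 e4 = 0 \<and> jacobiator f e2 e3 e4 = 0"
proof
  assume "jacobi_identity f"
  then show "jacobiator f e1 e2 e3 = 0 \<and> jacobiator f e1 e2 e4 = 0 \<and>
    jacobiator f e1 e3 e4 = 0 \<and> jacobiator f e2 e3 e4 = 0"
    by (simp add: jacobi_identity_iff_jacobiator)
next
  assume base: "jacobiator f e1 e2 e3 = 0 \<and> jacobiator f e1 e2 e4 = 0 \<and>
    jacobiator f e1 e3 e4 = 0 \<and> jacobiator f e2 e3 e4 = 0"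
  have perms: "jacobiator f v u w = 0 \<and> jacobiator f v w u = 0 \<and> jacobiator f w u v = 0 \<and>
      jacobiator f u w v = 0 \<and> jacobiator f w v u = 0" if "jacobiator f u v w = 0" for u v w
    using that jacobiator_swap[OF bil alt, of u v w] jacobiator_swap[OF bil alt, of w u v]
      jacobiator_swap[OF bil alt, of v w u] jacobiator_cycle[of f u v w] jacobiator_cycle[of f v w u]
    by simp
  have repeat: "jacobiator f u u w = 0" "jacobiator f u w u = 0" "jacobiator f w u u = 0" for u w
    using jacobiator_repeat[OF bil alt] jacobiator_cycle[of f u w u] jacobiator_cycle[of f w u u]
    by simp_all
  have zero: "jacobiator f e1 e2 e3 = 0" "jacobiator f e1 e2 e4 = 0"
      "jacobiator f e1 e3 e4 = 0" "jacobiator f e2 e3 e4 = 0"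
    using base by blast+
  have on_basis: "jacobiator f x y z = 0"
    if "x \<in> {e1, e2, e3, e4}" "y \<in> {e1, e2, e3, e4}" "z \<in> {e1, e2, e3, e4}" for x y z
    using that by (elim insertE emptyE; simp only: zero perms[OF zero(1)] perms[OF zero(2)]
        perms[OF zero(3)] perms[OF zero(4)] repeat)
  show "jacobi_identity f"
    unfolding jacobi_identity_iff_jacobiator
    using jacobiator_eq_0_on_span[OF bil alt span on_basis] by blast
qed

section \<open>Dual bases and frames\<close>

lemma dual_basis_eq:
  fixes es :: "'a::real_vector list"
  assumes ind: "independent (set es)" and dist: "distinct es" and span: "span (set es) = UNIV"
  shows "linear (dual_basis es i) \<and>
    (\<forall>j<length es. dual_basis es i (es ! j) = (if j = i then 1 else 0))"
proof -
  obtain g :: "'a \<Rightarrow> real"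
    where g: "linear g" "\<forall>x\<in>set es. g x = (if i < length es \<and> x = es ! i then 1 else 0)"
    using linear_independent_extend[OF ind, of "\<lambda>x. if i < length es \<and> x = es ! i then 1 else 0"]
    by blast
  have g_nth: "g (es ! j) = (if j = i then 1 else 0)" if "j < length es" for j
    using that g(2) nth_mem[OF that] nth_eq_iff_index_eq[OF dist that] by (cases "i < length es") auto
  have "dual_basis es i = g"
    unfolding dual_basis_def
  proof (rule the_equality)
    show "linear g \<and> (\<forall>j<length es. g (es ! j) = (if j = i then 1 else 0))"
      using g(1) g_nth by blast
  next
    fix f :: "'a \<Rightarrow> real"
    assume f: "linear f \<and> (\<forall>j<length es. f (es ! j) = (if j = i then 1 else 0))"
    have "f y = g y" if y: "y \<in> set es" for y
    proof -
      obtain j where "j < length es" "y = es ! j"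
        using y by (auto simp: in_set_conv_nth)
      then show ?thesis
        using f g_nth by simp
    qed
    then show "f = g"
      using linear_eq_on[OF conjunct1[OF f] g(1)] span by (metis UNIV_I ext)
  qed
  then show ?thesis
    using g(1) g_nth by simp
qed

lemma is_basis_of_UNIV:
  assumes ind: "independent (set es)" and dist: "distinct es" and span: "span (set es) = UNIV"
  shows "is_basis_of es UNIV"
  unfolding is_basis_of_def
proof (intro conjI allI impI)
  fix c i
  assume sum: "(\<Sum>j<length es. c j *\<^sub>R es ! j) = 0" and i: "i < length es"
  note dual = dual_basis_eq[OF ind dist span, of i]
  have "0 = dual_basis es i (\<Sum>j<length es. c j *\<^sub>R es ! j)"
    using sum dual linear_0 by metis
  also have "\<dots> = (\<Sum>j<length es. c j * dual_basis es i (es ! j))"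
    using dual by (simp add: linear_sum linear_scale)
  also have "\<dots> = (\<Sum>j<length es. if j = i then c i else 0)"
    by (rule sum.cong) (use dual in auto)
  also have "\<dots> = c i"
    using i by simp
  finally show "c i = 0"
    by simp
qed (use span in auto)

lemma is_basis_of_distinct:
  assumes "is_basis_of es S"
  shows "distinct es"
proof (subst distinct_conv_nth, intro allI impI notI)
  fix i j
  assume i: "i < length es" and j: "j < length es" and "i \<noteq> j" and eq: "es ! i = es ! j"
  define c where "c k = (if k = i then 1 else if k = j then -1 else (0::real))" for k
  have "(\<Sum>k<length es. c k *\<^sub>R es ! k) =
      (\<Sum>k<length es. (if k = i then es ! i else 0) - (if k = j then es ! j else 0))"
    by (rule sum.cong) (auto simp: c_def \<open>i \<noteq> j\<close>)
  also have "\<dots> = 0"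
    using i j eq by (simp add: sum_subtractf)
  finally have "c i = 0"
    using assms i unfolding is_basis_of_def by blast
  then show False
    by (simp add: c_def)
qed

lemma is_basis_of_independent:
  assumes basis: "is_basis_of es S"
  shows "independent (set es)"
proof (rule independent_if_scalars_zero[OF finite_set])
  fix f x
  assume sum: "(\<Sum>x\<in>set es. f x *\<^sub>R x) = 0" and x: "x \<in> set es"
  have inj: "inj_on (nth es) {..<length es}"
    using is_basis_of_distinct[OF basis] by (simp add: inj_on_nth)
  have "(\<Sum>k<length es. f (es ! k) *\<^sub>R es ! k) = (\<Sum>x\<in>set es. f x *\<^sub>R x)"
    using sum.reindex[OF inj, of "\<lambda>x. f x *\<^sub>R x"]
    by (simp add: set_conv_nth lessThan_def image_Collect)
  then have "(\<Sum>k<length es. (\<lambda>k. f (es ! k)) k *\<^sub>R es ! k) = 0"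
    using sum by simp
  then have "\<forall>k<length es. f (es ! k) = 0"
    using basis[unfolded is_basis_of_def, THEN conjunct2, THEN conjunct2, rule_format,
        of "\<lambda>k. f (es ! k)"] by blast
  then show "f x = 0"
    using x by (auto simp: in_set_conv_nth)
qed

lemma linear_functional_pair:
  fixes x y :: "'a::real_vector"
  assumes "independent {x, y}" and "x \<noteq> y"
  shows "\<exists>f. linear f \<and> f x = (c::real) \<and> f y = d"
proof -
  obtain f :: "'a \<Rightarrow> real" where "linear f" "\<forall>z\<in>{x, y}. f z = (if z = x then c else d)"
    using linear_independent_extend[OF assms(1), of "\<lambda>z. if z = x then c else d"] by blast
  then show ?thesis
    using assms(2) by (intro exI[of _ f]) auto
qed

lemma independent_if_coeffs4:
  fixes x1 x2 x3 x4 :: "'a::real_vector"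
  assumes coeffs: "\<And>c1 c2 c3 c4. c1 *\<^sub>R x1 + c2 *\<^sub>R x2 + c3 *\<^sub>R x3 + c4 *\<^sub>R x4 = 0 \<Longrightarrow>
    c1 = 0 \<and> c2 = 0 \<and> c3 = 0 \<and> c4 = 0"
  shows "distinct [x1, x2, x3, x4]" and "independent {x1, x2, x3, x4}"
proof -
  show dist: "distinct [x1, x2, x3, x4]"
    using coeffs[of 1 "-1" 0 0] coeffs[of 1 0 "-1" 0] coeffs[of 1 0 0 "-1"]
      coeffs[of 0 1 "-1" 0] coeffs[of 0 1 0 "-1"] coeffs[of 0 0 1 "-1"]
    by auto
  show "independent {x1, x2, x3, x4}"
  proof (rule independent_if_scalars_zero)
    fix f x
    assume "(\<Sum>x\<in>{x1, x2, x3, x4}. f x *\<^sub>R x) = 0" and x: "x \<in> {x1, x2, x3, x4}"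
    then have "f x1 *\<^sub>R x1 + f x2 *\<^sub>R x2 + f x3 *\<^sub>R x3 + f x4 *\<^sub>R x4 = 0"
      using dist by (simp add: add.assoc)
    then show "f x = 0"
      using coeffs x by blast
  qed simp
qed

locale frame4 =
  fixes e1 e2 e3 e4 :: "'a::real_vector"
  assumes independent: "independent {e1, e2, e3, e4}"
    and distinct: "distinct [e1, e2, e3, e4]"
    and spanning: "span {e1, e2, e3, e4} = UNIV"
begin

abbreviation coord :: "nat \<Rightarrow> 'a \<Rightarrow> real" where
  "coord i \<equiv> dual_basis [e1, e2, e3, e4] i"

lemma is_basis: "is_basis_of [e1, e2, e3, e4] UNIV"
  by (rule is_basis_of_UNIV) (use independent distinct spanning in simp_all)

lemma dual_coord:
  "linear (coord i) \<and> (\<forall>j<4. coord i ([e1, e2, e3, e4] ! j) = (if j = i then 1 else 0))"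
  using dual_basis_eq[of "[e1, e2, e3, e4]" i] independent distinct spanning by simp

lemma linear_coord: "linear (coord i)"
  using dual_coord by blast

lemma coord_basis [simp]:
  "coord i e1 = (if i = 0 then 1 else 0)" "coord i e2 = (if i = 1 then 1 else 0)"
  "coord i e3 = (if i = 2 then 1 else 0)" "coord i e4 = (if i = 3 then 1 else 0)"
proof -
  have "coord i ([e1, e2, e3, e4] ! j) = (if i = j then 1 else 0)" if "j < 4" for j
    using dual_coord[of i] that by (cases "i = j") auto
  from this[of 0] this[of 1] this[of 2] this[of 3] show
    "coord i e1 = (if i = 0 then 1 else 0)" "coord i e2 = (if i = 1 then 1 else 0)"
    "coord i e3 = (if i = 2 then 1 else 0)" "coord i e4 = (if i = 3 then 1 else 0)"
    by simp_all
qed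

lemma coord_linear_simps [simp]:
  "coord i (x + y) = coord i x + coord i y" "coord i (x - y) = coord i x - coord i y"
  "coord i (- x) = - coord i x" "coord i (r *\<^sub>R x) = r * coord i x" "coord i 0 = 0"
  using linear_coord[of i] by (simp_all add: linear_add linear_diff linear_neg linear_cmul linear_0)

lemma coord_expansion: "w = coord 0 w *\<^sub>R e1 + coord 1 w *\<^sub>R e2 + coord 2 w *\<^sub>R e3 + coord 3 w *\<^sub>R e4"
proof -
  have lin: "linear (\<lambda>w. coord i w *\<^sub>R e)" for i e
    using linear_compose[OF linear_coord linear_scale_left] by (simp add: o_def)
  have "id w = (\<lambda>w. coord 0 w *\<^sub>R e1 + coord 1 w *\<^sub>R e2 + coord 2 w *\<^sub>R e3 + coord 3 w *\<^sub>R e4) w"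
    by (rule linear_eq_on[OF linear_id, where x = w and B = "{e1, e2, e3, e4}"])
      (use spanning in \<open>auto intro!: linear_compose_add lin\<close>)
  then show ?thesis
    by simp
qed

lemma coord_eqI:
  assumes "coord 0 v = coord 0 w" "coord 1 v = coord 1 w" "coord 2 v = coord 2 w" "coord 3 v = coord 3 w"
  shows "v = w"
  using coord_expansion[of v] coord_expansion[of w] assms by metis

lemma eq_0_iff_coords: "v = 0 \<longleftrightarrow> coord 0 v = 0 \<and> coord 1 v = 0 \<and> coord 2 v = 0 \<and> coord 3 v = 0"
  using coord_eqI[of v 0] by auto

lemma bracket_form_jacobiator_coords:
  assumes bil: "bilinear f" and alt: "\<And>u. f u u = 0"
    and form: "bracket_form f e1 e2 e3 e4 a1 a2 b1 b2 b3 b4 x1 x2 y1 y2 p1 p2 q1 q2 r1 r2"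
  shows
    "coord 0 (jacobiator f e1 e2 e3) = a1*p1 + a2*q1 - p1*x2 + p2*y2 + q1*x1 - q2*y1"
    "coord 1 (jacobiator f e1 e2 e3) = a1*r1 - a2*p1 - p1*x1 + p2*y1 - r1*x2 + r2*y2"
    "coord 2 (jacobiator f e1 e2 e3) = - (a1*x1 + a2*x2)"
    "coord 3 (jacobiator f e1 e2 e3) = a1*y1 + a2*y2"
    "coord 0 (jacobiator f e1 e2 e4) = a1*p2 + a2*q2 - p1*y2 - p2*x2 + q1*y1 + q2*x1"
    "coord 1 (jacobiator f e1 e2 e4) = a1*r2 - a2*p2 - p1*y1 - p2*x1 - r1*y2 - r2*x2"
    "coord 2 (jacobiator f e1 e2 e4) = - (a1*y1 + a2*y2)"
    "coord 3 (jacobiator f e1 e2 e4) = - (a1*x1 + a2*x2)"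
    "coord 0 (jacobiator f e1 e3 e4) = a1*b2 - 2*b1*x1 - b3*p1 - b4*p2 + q1*r2 - q2*r1"
    "coord 1 (jacobiator f e1 e3 e4) = a2*b2 - 2*b2*x1 - b3*r1 - b4*r2 - 2*p1*r2 + 2*p2*r1"
    "coord 2 (jacobiator f e1 e3 e4) = - b3*x1 + b4*y1 + p1*y1 - p2*x1 + r1*y2 - r2*x2"
    "coord 3 (jacobiator f e1 e3 e4) = - b3*y1 - b4*x1 + p1*x1 + p2*y1 + r1*x2 + r2*y2"
    "coord 0 (jacobiator f e2 e3 e4) = - a1*b1 - 2*b1*x2 - b3*q1 - b4*q2 + 2*p1*q2 - 2*p2*q1"
    "coord 1 (jacobiator f e2 e3 e4) = - a2*b1 - 2*b2*x2 + b3*p1 + b4*p2 - q1*r2 + q2*r1"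
    "coord 2 (jacobiator f e2 e3 e4) = - b3*x2 + b4*y2 - p1*y2 + p2*x2 + q1*y1 - q2*x1"
    "coord 3 (jacobiator f e2 e3 e4) = - b3*y2 - b4*x2 - p1*x2 - p2*y2 + q1*x1 + q2*y1"
  by (simp_all add: alternating_skew[OF bil alt, of e2 e1] alternating_skew[OF bil alt, of e3 e1]
      alternating_skew[OF bil alt, of e4 e1] alternating_skew[OF bil alt, of e3 e2]
      alternating_skew[OF bil alt, of e4 e2] alternating_skew[OF bil alt, of e4 e3]
      jacobiator_def form[unfolded bracket_form_def] alt bilinear_ladd[OF bil]
      bilinear_radd[OF bil] bilinear_lsub[OF bil] bilinear_rsub[OF bil] bilinear_lmul[OF bil]
      bilinear_rmul[OF bil] bilinear_lneg[OF bil] bilinear_rneg[OF bil])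

lemma jacobi_identity_iff_jacobi_system:
  assumes bil: "bilinear f" and alt: "\<And>u. f u u = 0"
    and form: "bracket_form f e1 e2 e3 e4 a1 a2 b1 b2 b3 b4 x1 x2 y1 y2 p1 p2 q1 q2 r1 r2"
  shows "jacobi_identity f \<longleftrightarrow> jacobi_system a1 a2 b1 b2 b3 b4 x1 x2 y1 y2 p1 p2 q1 q2 r1 r2"
  unfolding jacobi_identity_iff_basis4[OF bil alt spanning] eq_0_iff_coords[of "jacobiator f _ _ _"]
    bracket_form_jacobiator_coords[OF bil alt form] jacobi_system_def neg_equal_0_iff_equal
  by blast

end

section \<open>Generalized complex structures\<close>

lemma in_Phi_phi_br:
  assumes bil: "bilinear br" and "in_Phi p" and "in_Phi q"
  shows "in_Phi (phi_br br p q)"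
proof -
  have "linear (\<lambda>w. snd r (br u w))" if "in_Phi r" for r u
    using linear_compose[of "br u" "snd r"] bil that by (simp add: bilinear_def in_Phi_def o_def)
  then show ?thesis
    using assms by (simp add: in_Phi_def phi_br_def ad_t_def linear_compose_sub)
qed

lemma nijenhuis_cong:
  assumes bil: "bilinear br" and eq: "\<And>p. in_Phi p \<Longrightarrow> K p = K' p"
    and closed: "\<And>p. in_Phi p \<Longrightarrow> in_Phi (K p)" and x: "in_Phi x" and y: "in_Phi y"
  shows "nijenhuis br K x y = nijenhuis br K' x y"
proof -
  have br: "in_Phi (phi_br br (K x) y)" "in_Phi (phi_br br x (K y))" "in_Phi (phi_br br x y)"
    using in_Phi_phi_br[OF bil] closed x y by blast+
  show ?thesis
    unfolding nijenhuis_def using eq[OF x] eq[OF y] eq[OF br(1)] eq[OF br(2)] eq[OF br(3)]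
      eq[OF closed[OF br(3)]] by simp
qed

locale gc_triple =
  fixes br :: "'a::euclidean_space \<Rightarrow> 'a \<Rightarrow> 'a" and J :: "'a \<Rightarrow> 'a"
    and R :: "('a \<Rightarrow> real) \<Rightarrow> 'a" and \<sigma> :: "'a \<Rightarrow> 'a \<Rightarrow> real"
  assumes gen_complex: "gen_complex_triple br J R \<sigma>"
begin

abbreviation K :: "'a phi \<Rightarrow> 'a phi" where
  "K \<equiv> gc_K J R \<sigma>"

lemma in_Phi_K: "in_Phi a \<Longrightarrow> in_Phi (K a)"
  and K_K: "in_Phi a \<Longrightarrow> K (K a) = phi_neg a"
  and K_skew: "in_Phi a \<Longrightarrow> in_Phi b \<Longrightarrow> phi_pair (K a) b + phi_pair a (K b) = 0"
  and nijenhuis_K: "in_Phi a \<Longrightarrow> in_Phi b \<Longrightarrow> nijenhuis br K a b = phi_zero"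
  using gen_complex unfolding gen_complex_triple_def gen_complex_structure_def by blast+

lemma in_Phi_vector: "in_Phi (u, \<lambda>w. 0)"
  by (simp add: in_Phi_def linear_zero)

lemma linear_sigma: "linear (\<sigma> u)"
  using in_Phi_K[OF in_Phi_vector, of u] by (simp add: in_Phi_def gc_K_def)

lemma sigma_skew: "\<sigma> v u = - \<sigma> u v"
  using K_skew[OF in_Phi_vector in_Phi_vector, of u v] by (simp add: phi_pair_def gc_K_def)

lemma sigma_self [simp]: "\<sigma> u u = 0"
  using sigma_skew[of u u] by simp

lemma linear_sigma_left: "linear (\<lambda>u. \<sigma> u w)"
  using linear_compose_neg[OF linear_sigma[of w]] sigma_skew[of _ w] by simp

lemma sigma_linear_simps [simp]:
  "\<sigma> (u + v) w = \<sigma> u w + \<sigma> v w" "\<sigma> (u - v) w = \<sigma> u w - \<sigma> v w"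
  "\<sigma> (- u) w = - \<sigma> u w" "\<sigma> (r *\<^sub>R u) w = r * \<sigma> u w" "\<sigma> 0 w = 0"
  "\<sigma> w (u + v) = \<sigma> w u + \<sigma> w v" "\<sigma> w (u - v) = \<sigma> w u - \<sigma> w v"
  "\<sigma> w (- u) = - \<sigma> w u" "\<sigma> w (r *\<^sub>R u) = r * \<sigma> w u" "\<sigma> w 0 = 0"
  by (simp_all add: linear_add[OF linear_sigma_left] linear_diff[OF linear_sigma_left]
      linear_neg[OF linear_sigma_left] linear_cmul[OF linear_sigma_left] linear_0[OF linear_sigma_left]
      linear_add[OF linear_sigma] linear_diff[OF linear_sigma] linear_neg[OF linear_sigma]
      linear_cmul[OF linear_sigma] linear_0[OF linear_sigma])

lemma linear_J: "linear J"
proof -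
  have "linear (\<lambda>w. J w \<bullet> b)" for b
  proof -
    have "in_Phi (K (0, \<lambda>w. w \<bullet> b))"
      by (rule in_Phi_K) (simp add: in_Phi_def bounded_linear_inner_left[THEN bounded_linear.linear])
    then have "linear (\<lambda>w. \<sigma> 0 w - J w \<bullet> b)"
      by (simp add: in_Phi_def gc_K_def)
    then show ?thesis
      using linear_compose_neg by fastforce
  qed
  then show ?thesis
    using linear_componentwise_iff by blast
qed

lemma J_linear_simps [simp]:
  "J (x + y) = J x + J y" "J (x - y) = J x - J y" "J (- x) = - J x" "J (r *\<^sub>R x) = r *\<^sub>R J x" "J 0 = 0"
  using linear_J by (simp_all add: linear_add linear_diff linear_neg linear_scale linear_0)

lemma R_skew: "linear \<alpha> \<Longrightarrow> linear \<beta> \<Longrightarrow> \<beta> (R \<alpha>) = - \<alpha> (R \<beta>)"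
  using K_skew[of "(0, \<alpha>)" "(0, \<beta>)"] by (simp add: in_Phi_def phi_pair_def gc_K_def linear_0)

lemma R_zero [simp]: "R (\<lambda>w. 0) = 0"
proof -
  have "(\<lambda>w. w \<bullet> R (\<lambda>w. 0)) (R (\<lambda>w. 0)) = - (\<lambda>w. 0) (R (\<lambda>w. w \<bullet> R (\<lambda>w. 0)))"
    by (rule R_skew) (simp_all add: linear_zero bounded_linear_inner_left[THEN bounded_linear.linear])
  then show ?thesis
    by simp
qed

lemma K_K_components:
  assumes "linear \<alpha>"
  shows "J (J u + R \<alpha>) + R (\<lambda>w. \<sigma> u w - \<alpha> (J w)) = - u"
    and "\<sigma> (J u + R \<alpha>) w - (\<sigma> u (J w) - \<alpha> (J (J w))) = - \<alpha> w"
proof -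
  have "K (K (u, \<alpha>)) = phi_neg (u, \<alpha>)"
    using K_K assms by (simp add: in_Phi_def)
  then show "J (J u + R \<alpha>) + R (\<lambda>w. \<sigma> u w - \<alpha> (J w)) = - u"
    and "\<sigma> (J u + R \<alpha>) w - (\<sigma> u (J w) - \<alpha> (J (J w))) = - \<alpha> w"
    by (simp_all add: gc_K_def phi_neg_def phi_scale_def fun_eq_iff)
qed

lemma J_squared: "J (J u) + R (\<sigma> u) = - u"
  using K_K_components(1)[OF linear_zero, of u] by simp

lemma J_R: "linear \<alpha> \<Longrightarrow> J (R \<alpha>) = - R (\<lambda>w. - \<alpha> (J w))"
  using K_K_components(1)[of \<alpha> 0] by (simp add: eq_neg_iff_add_eq_0)

lemma sigma_J: "\<sigma> (J u) w = \<sigma> u (J w)"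
  using K_K_components(2)[OF linear_zero, of u w] by simp

end

section \<open>Structures of type 1 in dimension four\<close>

locale imR_basis = gc_triple +
  fixes e1 e2
  assumes e1_in_imR: "e1 \<in> imR R" and imR_subset: "imR R \<subseteq> span {e1, e2}"
    and independent_e12: "independent {e1, e2}" and e1_neq_e2: "e1 \<noteq> e2"
begin

definition dual1 :: "'a \<Rightarrow> real" where
  "dual1 = (SOME f. linear f \<and> f e1 = 1 \<and> f e2 = 0)"

definition dual2 :: "'a \<Rightarrow> real" where
  "dual2 = (SOME f. linear f \<and> f e1 = 0 \<and> f e2 = 1)"

lemma dual1: "linear dual1" "dual1 e1 = 1" "dual1 e2 = 0"
  and dual2: "linear dual2" "dual2 e1 = 0" "dual2 e2 = 1"
  using someI_ex[OF linear_functional_pair[OF independent_e12 e1_neq_e2, of 1 0]]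
    someI_ex[OF linear_functional_pair[OF independent_e12 e1_neq_e2, of 0 1]]
  by (simp_all add: dual1_def dual2_def)

lemma dual12_simps [simp]:
  "dual1 (x + y) = dual1 x + dual1 y" "dual1 (x - y) = dual1 x - dual1 y" "dual1 (r *\<^sub>R x) = r * dual1 x"
  "dual2 (x + y) = dual2 x + dual2 y" "dual2 (x - y) = dual2 x - dual2 y" "dual2 (r *\<^sub>R x) = r * dual2 x"
  by (simp_all add: linear_add[OF dual1(1)] linear_diff[OF dual1(1)] linear_cmul[OF dual1(1)]
      linear_add[OF dual2(1)] linear_diff[OF dual2(1)] linear_cmul[OF dual2(1)])

lemma coeffs_e12_zero:
  assumes "x *\<^sub>R e1 + y *\<^sub>R e2 = 0"
  shows "x = 0 \<and> y = 0"
proof -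
  have "dual1 (x *\<^sub>R e1 + y *\<^sub>R e2) = 0" "dual2 (x *\<^sub>R e1 + y *\<^sub>R e2) = 0"
    using assms linear_0[OF dual1(1)] linear_0[OF dual2(1)] by simp_all
  then show ?thesis
    using dual1 dual2 by simp
qed

lemma imR_expansion: "v \<in> imR R \<Longrightarrow> v = dual1 v *\<^sub>R e1 + dual2 v *\<^sub>R e2"
proof -
  assume "v \<in> imR R"
  then have "v \<in> span {e1, e2}"
    using imR_subset by blast
  then obtain x where "v - x *\<^sub>R e1 \<in> span {e2}"
    using span_breakdown_eq by blast
  then obtain y where "v - x *\<^sub>R e1 - y *\<^sub>R e2 \<in> span {}"
    using span_breakdown_eq by blast
  then have v: "v = x *\<^sub>R e1 + y *\<^sub>R e2"
    by (simp add: algebra_simps)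
  then show ?thesis
    using dual1 dual2 by simp
qed

definition a :: real where
  "a = dual2 (R dual1)"

lemma R_eq: "linear \<alpha> \<Longrightarrow> R \<alpha> = a *\<^sub>R wedge_sharp e1 e2 \<alpha>"
proof -
  assume \<alpha>: "linear \<alpha>"
  have R_in: "linear \<beta> \<Longrightarrow> R \<beta> \<in> imR R" for \<beta>
    by (simp add: imR_def)
  have "dual1 (R dual1) = 0" "dual2 (R dual2) = 0" "dual1 (R dual2) = - a"
    using R_skew[OF dual1(1) dual1(1)] R_skew[OF dual2(1) dual2(1)] R_skew[OF dual2(1) dual1(1)]
    by (simp_all add: a_def)
  then have R_dual1: "R dual1 = a *\<^sub>R e2" and R_dual2: "R dual2 = - a *\<^sub>R e1"
    using imR_expansion[OF R_in[OF dual1(1)]] imR_expansion[OF R_in[OF dual2(1)]] by (simp_all add: a_def)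
  have "dual1 (R \<alpha>) = - a * \<alpha> e2" "dual2 (R \<alpha>) = a * \<alpha> e1"
    using R_skew[OF \<alpha> dual1(1)] R_skew[OF \<alpha> dual2(1)] R_dual1 R_dual2
      linear_cmul[OF \<alpha>] linear_neg[OF \<alpha>]
    by simp_all
  then show ?thesis
    using imR_expansion[OF R_in[OF \<alpha>]] by (simp add: wedge_sharp_def algebra_simps)
qed

lemma a_nonzero: "a \<noteq> 0"
proof
  assume "a = 0"
  obtain \<alpha> where "linear \<alpha>" "e1 = R \<alpha>"
    using e1_in_imR unfolding imR_def by blast
  then have "e1 = 0"
    using R_eq \<open>a = 0\<close> by simp
  then show False
    using coeffs_e12_zero[of 1 0] by simp
qed

lemma comb_in_imR: "x *\<^sub>R e1 + y *\<^sub>R e2 \<in> imR R"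
proof -
  have lin: "linear (\<lambda>w. (y / a) * dual1 w - (x / a) * dual2 w)"
    using linear_compose_sub[OF linear_compose_scale_right[OF dual1(1), of "y / a"]
        linear_compose_scale_right[OF dual2(1), of "x / a"]] by simp
  have "R (\<lambda>w. (y / a) * dual1 w - (x / a) * dual2 w) \<in> imR R"
    using lin by (simp add: imR_def)
  moreover have "R (\<lambda>w. (y / a) * dual1 w - (x / a) * dual2 w) = x *\<^sub>R e1 + y *\<^sub>R e2"
    using R_eq[OF lin] dual1 dual2 a_nonzero by (simp add: wedge_sharp_def scaleR_add_right add.commute)
  ultimately show ?thesis
    by simp
qed

definition lam :: real where
  "lam = dual1 (J e1)"

lemma J_R_eq: "linear \<alpha> \<Longrightarrow> J (R \<alpha>) = a *\<^sub>R wedge_sharp e1 e2 (\<lambda>w. \<alpha> (J w))"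
proof -
  assume \<alpha>: "linear \<alpha>"
  have "linear (\<lambda>w. - \<alpha> (J w))"
    using linear_compose_neg[OF linear_compose[OF linear_J \<alpha>]] by (simp add: o_def)
  then show ?thesis
    using J_R[OF \<alpha>] R_eq by (simp add: wedge_sharp_def algebra_simps)
qed

lemma J_e1_e2_expansion:
  "J e1 = dual2 (J e2) *\<^sub>R e1 - dual2 (J e1) *\<^sub>R e2"
  "J e2 = dual1 (J e1) *\<^sub>R e2 - dual1 (J e2) *\<^sub>R e1"
proof -
  have lin: "linear (\<lambda>w. c * f w)" if "linear f" for f and c :: real
    using linear_compose_scale_right[OF that, of c] by simp
  have "R (\<lambda>w. (- 1 / a) * dual2 w) = e1" "R (\<lambda>w. (1 / a) * dual1 w) = e2"
    using R_eq[OF lin[OF dual2(1), of "- 1 / a"]] R_eq[OF lin[OF dual1(1), of "1 / a"]] dual1 dual2 a_nonzero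
    by (simp_all add: wedge_sharp_def)
  then show "J e1 = dual2 (J e2) *\<^sub>R e1 - dual2 (J e1) *\<^sub>R e2"
    "J e2 = dual1 (J e1) *\<^sub>R e2 - dual1 (J e2) *\<^sub>R e1"
    using J_R_eq[OF lin[OF dual2(1), of "- 1 / a"]] J_R_eq[OF lin[OF dual1(1), of "1 / a"]] a_nonzero
    by (simp_all add: wedge_sharp_def algebra_simps)
qed

lemma J_e1: "J e1 = lam *\<^sub>R e1" and J_e2: "J e2 = lam *\<^sub>R e2"
proof -
  have "dual2 (J e1) = - dual2 (J e1)" "dual1 (J e2) = - dual1 (J e2)" "dual1 (J e1) = dual2 (J e2)"
    using arg_cong[OF J_e1_e2_expansion(1), of dual2] arg_cong[OF J_e1_e2_expansion(2), of dual1]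
      arg_cong[OF J_e1_e2_expansion(1), of dual1] dual1 dual2 by simp_all
  then show "J e1 = lam *\<^sub>R e1" "J e2 = lam *\<^sub>R e2"
    using J_e1_e2_expansion by (simp_all add: lam_def)
qed

definition c :: real where
  "c = \<sigma> e1 e2"

lemma a_c: "a * c = 1 + lam\<^sup>2"
proof -
  have "J (J e1) + R (\<sigma> e1) = - e1"
    by (rule J_squared)
  moreover have "R (\<sigma> e1) = (- a * c) *\<^sub>R e1"
    using R_eq[OF linear_sigma] by (simp add: wedge_sharp_def c_def)
  ultimately have "(lam * lam - a * c + 1) *\<^sub>R e1 + 0 *\<^sub>R e2 = 0"
    by (simp add: J_e1 algebra_simps)
  then have "lam * lam - a * c + 1 = 0"
    using coeffs_e12_zero by blast
  then show ?thesis
    unfolding power2_eq_square by linarith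
qed

lemma c_nonzero: "c \<noteq> 0"
  using a_c by (metis add_pos_nonneg mult_zero_right zero_le_power2 zero_less_one less_irrefl)

definition sigma_orth :: "'a set" where
  "sigma_orth = {v. \<sigma> v e1 = 0 \<and> \<sigma> v e2 = 0}"

lemma imR_inter_sigma_orth: "u \<in> imR R \<Longrightarrow> u \<in> sigma_orth \<Longrightarrow> u = 0"
proof -
  assume u: "u \<in> imR R" "u \<in> sigma_orth"
  have "\<sigma> u e2 = dual1 u * c" "\<sigma> u e1 = - dual2 u * c"
    using arg_cong[OF imR_expansion[OF u(1)], of "\<lambda>z. \<sigma> z e2"]
      arg_cong[OF imR_expansion[OF u(1)], of "\<lambda>z. \<sigma> z e1"] sigma_skew[of e2 e1]
    by (simp_all add: c_def)
  then have "dual1 u = 0" "dual2 u = 0"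
    using u(2) c_nonzero by (simp_all add: sigma_orth_def)
  then show "u = 0"
    using imR_expansion[OF u(1)] by simp
qed

definition proj_imR :: "'a \<Rightarrow> 'a" where
  "proj_imR w = (\<sigma> w e2 / c) *\<^sub>R e1 - (\<sigma> w e1 / c) *\<^sub>R e2"

lemma proj_imR_in: "proj_imR w \<in> imR R"
  using comb_in_imR[of "\<sigma> w e2 / c" "- (\<sigma> w e1 / c)"] by (simp add: proj_imR_def)

lemma diff_proj_imR_in: "w - proj_imR w \<in> sigma_orth"
  using c_nonzero sigma_skew[of e2 e1] by (simp add: sigma_orth_def proj_imR_def c_def)

lemma sigma_orth_comb: "u \<in> sigma_orth \<Longrightarrow> v \<in> sigma_orth \<Longrightarrow> x *\<^sub>R u + y *\<^sub>R v \<in> sigma_orth"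
  by (simp add: sigma_orth_def)

lemma J_sigma_orth: "v \<in> sigma_orth \<Longrightarrow> J v \<in> sigma_orth"
  by (simp add: sigma_orth_def sigma_J J_e1 J_e2)

lemma J_J_sigma_orth: "v \<in> sigma_orth \<Longrightarrow> J (J v) = - v"
  using J_squared[of v] R_eq[OF linear_sigma, of v] by (simp add: sigma_orth_def wedge_sharp_def)

text \<open>Im R meets sigma_orth trivially, and J has no real eigenvector in sigma_orth since it
  squares to -1 there.\<close>
lemma frame_coeffs_zero:
  assumes v: "v \<in> sigma_orth" "v \<noteq> 0"
    and eq: "x1 *\<^sub>R e1 + x2 *\<^sub>R e2 + x3 *\<^sub>R v + x4 *\<^sub>R J v = 0"
  shows "x1 = 0 \<and> x2 = 0 \<and> x3 = 0 \<and> x4 = 0"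
proof -
  let ?p = "x3 *\<^sub>R v + x4 *\<^sub>R J v"
  have p_eq: "?p = (- x1) *\<^sub>R e1 + (- x2) *\<^sub>R e2"
    using eq by (simp add: algebra_simps eq_neg_iff_add_eq_0)
  have "?p \<in> sigma_orth"
    using sigma_orth_comb[OF v(1) J_sigma_orth[OF v(1)]] .
  then have p0: "?p = 0"
    using imR_inter_sigma_orth comb_in_imR p_eq by metis
  then have "(- x1) *\<^sub>R e1 + (- x2) *\<^sub>R e2 = 0"
    using p_eq by simp
  then have x12: "x1 = 0 \<and> x2 = 0"
    using coeffs_e12_zero by fastforce
  have "(x3 * x3 + x4 * x4) *\<^sub>R v = x3 *\<^sub>R ?p - x4 *\<^sub>R J ?p"
    using J_J_sigma_orth[OF v(1)] by (simp add: algebra_simps)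
  then have "x3 * x3 + x4 * x4 = 0"
    using p0 v(2) by simp
  then have "x3 = 0 \<and> x4 = 0"
    by (metis add_nonneg_eq_0_iff mult_eq_0_iff zero_le_square)
  then show ?thesis
    using x12 by simp
qed

lemma frame4_sigma_orth:
  assumes dim: "DIM('a) = 4" and v: "v \<in> sigma_orth" "v \<noteq> 0"
  shows "frame4 e1 e2 v (J v)"
proof
  note coeffs = independent_if_coeffs4[of e1 e2 v "J v", OF frame_coeffs_zero[OF v]]
  show "distinct [e1, e2, v, J v]"
    using coeffs(1) by simp
  show "independent {e1, e2, v, J v}"
    using coeffs(2) by simp
  have "card {e1, e2, v, J v} = 4"
    using coeffs(1) by simp
  then show "span {e1, e2, v, J v} = UNIV"
    using card_ge_dim_independent[OF subset_UNIV coeffs(2)] dim dim_UNIV by auto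
qed

lemma sigma_orth_subset_ker:
  assumes dim: "DIM('a) = 4" and u: "u \<in> sigma_orth"
  shows "u \<in> ker_sigma \<sigma>"
proof (cases "u = 0")
  case False
  interpret frame: frame4 e1 e2 u "J u"
    using frame4_sigma_orth[OF dim u False] .
  have in_span: "w = frame.coord 2 w *\<^sub>R u + frame.coord 3 w *\<^sub>R J u" if "w \<in> sigma_orth" for w
  proof -
    let ?q = "frame.coord 0 w *\<^sub>R e1 + frame.coord 1 w *\<^sub>R e2"
    have "?q = 1 *\<^sub>R w + (- 1) *\<^sub>R (frame.coord 2 w *\<^sub>R u + frame.coord 3 w *\<^sub>R J u)"
      using frame.coord_expansion[of w] by (simp add: algebra_simps)
    then have "?q \<in> sigma_orth"
      using sigma_orth_comb[OF that sigma_orth_comb[OF u J_sigma_orth[OF u]]] by metis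
    then have "?q = 0"
      using imR_inter_sigma_orth comb_in_imR by blast
    then show ?thesis
      using frame.coord_expansion[of w] by simp
  qed
  have "\<sigma> u (J u) = 0"
    using sigma_J[of u u] sigma_skew[of "J u" u] by simp
  then have "\<sigma> u w = 0" if "w \<in> sigma_orth" for w
    by (subst in_span[OF that]) simp
  then have "\<sigma> u (w - proj_imR w) = 0" for w
    using diff_proj_imR_in by blast
  moreover have "\<sigma> u (proj_imR w) = 0" for w
    using u by (simp add: sigma_orth_def proj_imR_def)
  ultimately have "\<sigma> u w = 0" for w
    by (metis sigma_linear_simps(7) diff_zero)
  then show ?thesis
    by (simp add: ker_sigma_def fun_eq_iff)
qed (simp add: ker_sigma_def fun_eq_iff)

lemma imR_inter_ker: "imR R \<inter> ker_sigma \<sigma> = {0}"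
proof -
  have "0 \<in> imR R"
    using comb_in_imR[of 0 0] by simp
  moreover have "ker_sigma \<sigma> \<subseteq> sigma_orth"
    by (auto simp: ker_sigma_def sigma_orth_def)
  ultimately show ?thesis
    using imR_inter_sigma_orth by (auto simp: ker_sigma_def)
qed

lemma imR_plus_ker:
  assumes "DIM('a) = 4"
  shows "{h + p | h p. h \<in> imR R \<and> p \<in> ker_sigma \<sigma>} = UNIV"
proof -
  have "w = proj_imR w + (w - proj_imR w)" for w
    by simp
  then show ?thesis
    using proj_imR_in sigma_orth_subset_ker[OF assms diff_proj_imR_in] by blast
qed

end

context gc_triple
begin

lemma imR_basis_of_basis:
  assumes "is_basis_of [e1, e2] (imR R)"
  shows "imR_basis br J R \<sigma> e1 e2"
proof
  show "e1 \<in> imR R" "imR R \<subseteq> span {e1, e2}"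
    using assms unfolding is_basis_of_def by auto
  show "independent {e1, e2}" "e1 \<noteq> e2"
    using is_basis_of_independent[OF assms] is_basis_of_distinct[OF assms] by auto
qed

lemma imR_basis_exists:
  assumes "gc_type1 R"
  obtains x y where "imR_basis br J R \<sigma> x y"
proof -
  obtain B where B: "B \<subseteq> imR R" "independent B" "imR R \<subseteq> span B" "card B = dim (imR R)"
    using basis_exists by blast
  then obtain x y where "x \<noteq> y" "B = {x, y}"
    using assms by (auto simp: gc_type1_def card_2_iff)
  then have "imR_basis br J R \<sigma> x y"
    using B by unfold_locales auto
  then show ?thesis
    by (rule that)
qed

end

locale adapted_frame = imR_basis +
  fixes e3 e4
  assumes dim4: "DIM('a) = 4" and br_bilinear: "bilinear br" and br_self [simp]: "br u u = 0"
    and e3_ker: "e3 \<in> ker_sigma \<sigma>" and e3_nonzero: "e3 \<noteq> 0" and e4_def: "e4 = J e3"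
begin

lemma e3_sigma_orth: "e3 \<in> sigma_orth"
  using e3_ker by (simp add: ker_sigma_def sigma_orth_def)

lemma J_e3: "J e3 = e4" and J_e4: "J e4 = - e3"
  using e4_def J_J_sigma_orth[OF e3_sigma_orth] by simp_all

lemma sigma_e3: "\<sigma> e3 = (\<lambda>w. 0)" and sigma_e4: "\<sigma> e4 = (\<lambda>w. 0)"
  using e3_ker sigma_J[of e3] by (simp_all add: ker_sigma_def e4_def fun_eq_iff)

lemma frame4: "frame4 e1 e2 e3 e4"
  using frame4_sigma_orth[OF dim4 e3_sigma_orth e3_nonzero] e4_def by simp

end

sublocale adapted_frame \<subseteq> frame4 e1 e2 e3 e4
  by (fact frame4)

context adapted_frame
begin

lemma coord_J [simp]:
  "coord 0 (J w) = lam * coord 0 w" "coord 1 (J w) = lam * coord 1 w"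
  "coord 2 (J w) = - coord 3 w" "coord 3 (J w) = coord 2 w"
proof -
  have "J w = (lam * coord 0 w) *\<^sub>R e1 + (lam * coord 1 w) *\<^sub>R e2 + (- coord 3 w) *\<^sub>R e3 + coord 2 w *\<^sub>R e4"
    by (subst coord_expansion[of w]) (simp add: J_e1 J_e2 J_e3 J_e4 mult.commute)
  then show "coord 0 (J w) = lam * coord 0 w" "coord 1 (J w) = lam * coord 1 w"
    "coord 2 (J w) = - coord 3 w" "coord 3 (J w) = coord 2 w"
    by simp_all
qed

lemma sigma_eq: "\<sigma> u w = c * (coord 0 u * coord 1 w - coord 0 w * coord 1 u)"
proof -
  have zero: "\<sigma> e3 x = 0" "\<sigma> x e3 = 0" "\<sigma> e4 x = 0" "\<sigma> x e4 = 0" for x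
    using sigma_e3 sigma_e4 sigma_skew[of x e3] sigma_skew[of x e4] by simp_all
  show ?thesis
    by (subst (1 2) coord_expansion)
      (simp add: zero c_def sigma_skew[of e2 e1] algebra_simps)
qed

lemma br_linear_simps [simp]:
  "br (x + y) v = br x v + br y v" "br u (x + y) = br u x + br u y"
  "br (x - y) v = br x v - br y v" "br u (x - y) = br u x - br u y"
  "br (r *\<^sub>R x) v = r *\<^sub>R br x v" "br u (r *\<^sub>R x) = r *\<^sub>R br u x"
  "br (- x) v = - br x v" "br u (- x) = - br u x" "br 0 v = 0" "br u 0 = 0"
  using br_bilinear
  by (simp_all add: bilinear_ladd bilinear_radd bilinear_lsub bilinear_rsub bilinear_lmul
      bilinear_rmul bilinear_lneg bilinear_rneg bilinear_lzero bilinear_rzero)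

lemma br_swap [simp]:
  "br e2 e1 = - br e1 e2" "br e3 e1 = - br e1 e3" "br e4 e1 = - br e1 e4"
  "br e3 e2 = - br e2 e3" "br e4 e2 = - br e2 e4" "br e4 e3 = - br e3 e4"
  by (rule alternating_skew[OF br_bilinear br_self])+

text \<open>R is only determined on linear functionals, so the torsion is evaluated for a model of K that
  is given by explicit formulas everywhere and agrees with K on Phi(g).\<close>
abbreviation K_model :: "'a phi \<Rightarrow> 'a phi" where
  "K_model \<equiv> gc_K J (\<lambda>\<alpha>. a *\<^sub>R wedge_sharp e1 e2 \<alpha>) \<sigma>"

lemma nijenhuis_K_model:
  assumes "in_Phi x" and "in_Phi y"
  shows "nijenhuis br K_model x y = phi_zero"
proof -
  have "K p = K_model p" if "in_Phi p" for p
    using that by (simp add: gc_K_def in_Phi_def R_eq)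
  then show ?thesis
    using nijenhuis_cong[OF br_bilinear _ in_Phi_K assms] nijenhuis_K[OF assms] by simp
qed

lemma in_Phi_coord: "in_Phi (0, coord i)"
  by (simp add: in_Phi_def linear_coord)

lemma bracket_constraints:
  "coord 2 (br e1 e2) = 0" "coord 3 (br e1 e2) = 0"
  "coord 2 (br e1 e4) = - coord 3 (br e1 e3)" "coord 3 (br e1 e4) = coord 2 (br e1 e3)"
  "coord 2 (br e2 e4) = - coord 3 (br e2 e3)" "coord 3 (br e2 e4) = coord 2 (br e2 e3)"
  "coord 1 (br e2 e3) = - coord 0 (br e1 e3)" "coord 1 (br e2 e4) = - coord 0 (br e1 e4)"
proof -
  note simps = nijenhuis_def phi_add_def phi_neg_def phi_scale_def phi_br_def ad_t_def gc_K_def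
    wedge_sharp_def sigma_eq J_e1 J_e2 J_e3 J_e4 phi_zero_def
  have A: "a * coord 2 (br e1 e2) = 0 \<and> a * coord 3 (br e1 e2) = 0"
    using arg_cong[OF nijenhuis_K_model[OF in_Phi_coord in_Phi_coord, of 0 1],
        of "\<lambda>p. (coord 2 (fst p), coord 3 (fst p))"]
    by (simp add: simps algebra_simps)
  have B: "a * (coord 3 (br e1 e3) + coord 2 (br e1 e4)) = 0 \<and>
      a * (coord 3 (br e1 e4) - coord 2 (br e1 e3)) = 0"
    using arg_cong[OF nijenhuis_K_model[OF in_Phi_coord in_Phi_coord, of 1 2],
        of "\<lambda>p. (snd p e3, snd p e4)"]
    by (simp add: simps algebra_simps)
  have C: "a * (coord 3 (br e2 e3) + coord 2 (br e2 e4)) = 0 \<and>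
      a * (coord 2 (br e2 e3) - coord 3 (br e2 e4)) = 0"
    using arg_cong[OF nijenhuis_K_model[OF in_Phi_coord in_Phi_coord, of 0 2],
        of "\<lambda>p. (snd p e3, snd p e4)"]
    by (simp add: simps algebra_simps)
  have D: "a * c * (coord 0 (br e1 e3) + coord 1 (br e2 e3)) = 0"
    using arg_cong[OF nijenhuis_K_model[OF in_Phi_vector in_Phi_vector, of e1 e3],
        of "\<lambda>p. coord 0 (fst p)"]
    by (simp add: simps algebra_simps)
  have E: "a * c * (coord 0 (br e1 e4) + coord 1 (br e2 e4)) = 0"
    using arg_cong[OF nijenhuis_K_model[OF in_Phi_vector in_Phi_vector, of e1 e4],
        of "\<lambda>p. coord 0 (fst p)"]
    by (simp add: simps algebra_simps)
  show "coord 2 (br e1 e2) = 0" "coord 3 (br e1 e2) = 0"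
    "coord 2 (br e1 e4) = - coord 3 (br e1 e3)" "coord 3 (br e1 e4) = coord 2 (br e1 e3)"
    "coord 2 (br e2 e4) = - coord 3 (br e2 e3)" "coord 3 (br e2 e4) = coord 2 (br e2 e3)"
    "coord 1 (br e2 e3) = - coord 0 (br e1 e3)" "coord 1 (br e2 e4) = - coord 0 (br e1 e4)"
    using A B C D E a_nonzero c_nonzero by auto
qed

lemma bracket_form_exists:
  "\<exists>a1 a2 b1 b2 b3 b4 x1 x2 y1 y2 p1 p2 q1 q2 r1 r2.
     bracket_form br e1 e2 e3 e4 a1 a2 b1 b2 b3 b4 x1 x2 y1 y2 p1 p2 q1 q2 r1 r2"
proof -
  have "bracket_form br e1 e2 e3 e4
      (coord 0 (br e1 e2)) (coord 1 (br e1 e2))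
      (coord 0 (br e3 e4)) (coord 1 (br e3 e4)) (coord 2 (br e3 e4)) (coord 3 (br e3 e4))
      (coord 2 (br e1 e3)) (coord 2 (br e2 e3)) (- coord 3 (br e1 e3)) (- coord 3 (br e2 e3))
      (- coord 0 (br e1 e3)) (- coord 0 (br e1 e4)) (- coord 0 (br e2 e3)) (- coord 0 (br e2 e4))
      (- coord 1 (br e1 e3)) (- coord 1 (br e1 e4))"
    unfolding bracket_form_def
    by (intro conjI; rule coord_eqI; simp add: bracket_constraints bracket_constraints[unfolded One_nat_def])
  then show ?thesis
    by blast
qed

lemma structure_J_R_sigma:
  "\<exists>lam a. a \<noteq> 0 \<and>
     J e1 = lam *\<^sub>R e1 \<and> J e2 = lam *\<^sub>R e2 \<and> J e3 = e4 \<and> J e4 = - e3 \<and>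
     (\<forall>\<alpha>. linear \<alpha> \<longrightarrow> R \<alpha> = a *\<^sub>R wedge_sharp e1 e2 \<alpha>) \<and>
     (\<forall>u. \<sigma> u = (\<lambda>w. (1 + lam\<^sup>2) / a *
        wedge_flat (dual_basis [e1, e2, e3, e4] 0) (dual_basis [e1, e2, e3, e4] 1) u w))"
proof (intro exI conjI allI impI)
  have "c = (1 + lam\<^sup>2) / a"
    using a_c a_nonzero by (simp add: field_simps)
  then show "\<sigma> u = (\<lambda>w. (1 + lam\<^sup>2) / a * wedge_flat (coord 0) (coord 1) u w)" for u
    by (simp add: fun_eq_iff sigma_eq wedge_flat_def)
qed (simp_all add: a_nonzero J_e1 J_e2 J_e3 J_e4 R_eq)

end

theorem proposition2p1:
  fixes br :: "'g::euclidean_space \<Rightarrow> 'g \<Rightarrow> 'g"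
    and J :: "'g \<Rightarrow> 'g"
    and R :: "('g \<Rightarrow> real) \<Rightarrow> 'g"
    and \<sigma> :: "'g \<Rightarrow> ('g \<Rightarrow> real)"
  assumes dim4: "DIM('g) = 4"
    and lie: "lie_algebra br"
    and gcs: "gen_complex_triple br J R \<sigma>"
    and type1: "gc_type1 R"
  shows "imR R \<inter> ker_sigma \<sigma> = {0} \<and> {h + p | h p. h \<in> imR R \<and> p \<in> ker_sigma \<sigma>} = UNIV \<and>
    (\<forall>e1 e2 e3 e4. is_basis_of [e1, e2] (imR R) \<and> e3 \<in> ker_sigma \<sigma> \<and> e3 \<noteq> 0 \<and> e4 = J e3 \<longrightarrow>
      is_basis_of [e1, e2, e3, e4] UNIV \<and>
      (\<exists>lam a. a \<noteq> 0 \<and>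
         J e1 = lam *\<^sub>R e1 \<and> J e2 = lam *\<^sub>R e2 \<and> J e3 = e4 \<and> J e4 = - e3 \<and>
         (\<forall>\<alpha>. linear \<alpha> \<longrightarrow> R \<alpha> = a *\<^sub>R wedge_sharp e1 e2 \<alpha>) \<and>
         (\<forall>u. \<sigma> u = (\<lambda>w. (1 + lam\<^sup>2) / a *
                 wedge_flat (dual_basis [e1, e2, e3, e4] 0) (dual_basis [e1, e2, e3, e4] 1) u w))) \<and>
      (\<exists>a1 a2 b1 b2 b3 b4 x1 x2 y1 y2 p1 p2 q1 q2 r1 r2.
         bracket_form br e1 e2 e3 e4 a1 a2 b1 b2 b3 b4 x1 x2 y1 y2 p1 p2 q1 q2 r1 r2) \<and>
      (\<forall>a1 a2 b1 b2 b3 b4 x1 x2 y1 y2 p1 p2 q1 q2 r1 r2 (br' :: 'g \<Rightarrow> 'g \<Rightarrow> 'g).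
         bilinear br' \<and> (\<forall>u. br' u u = 0) \<and>
         bracket_form br' e1 e2 e3 e4 a1 a2 b1 b2 b3 b4 x1 x2 y1 y2 p1 p2 q1 q2 r1 r2 \<longrightarrow>
         (jacobi_identity br' \<longleftrightarrow> jacobi_system a1 a2 b1 b2 b3 b4 x1 x2 y1 y2 p1 p2 q1 q2 r1 r2)))"
proof -
  interpret gc_triple br J R \<sigma>
    using gcs by unfold_locales
  obtain x y where "imR_basis br J R \<sigma> x y"
    using imR_basis_exists[OF type1] .
  then interpret some_basis: imR_basis br J R \<sigma> x y .
  have frame: "adapted_frame br J R \<sigma> e1 e2 e3 e4"
    if "is_basis_of [e1, e2] (imR R)" "e3 \<in> ker_sigma \<sigma>" "e3 \<noteq> 0" "e4 = J e3" for e1 e2 e3 e4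
    using imR_basis_of_basis[OF that(1)] dim4 lie that(2-4)
    by (simp add: adapted_frame_def adapted_frame_axioms_def lie_algebra_def)
  show ?thesis
  proof (intro conjI allI impI; (elim conjE)?)
  qed (rule some_basis.imR_inter_ker some_basis.imR_plus_ker[OF dim4]
      frame4.is_basis[OF adapted_frame.frame4[OF frame]] adapted_frame.structure_J_R_sigma[OF frame]
      adapted_frame.bracket_form_exists[OF frame]
      frame4.jacobi_identity_iff_jacobi_system[OF adapted_frame.frame4[OF frame]]; blast)+
qed

end
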